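(* For every integer $F\ge6$, $$s(F,F,2)=3F-8+s(F-3,F-3,2).$$ (In particular, with $s(3,3,2)=1$, $s(4,4,2)=4$, $s(5,5,2)=7$, this determines $s(F,F,2)$ for all $F\ge3$.)
   Context: A placement delivery array $S$-PDA$(F,K,Z)$ is an $F\times K$ array $R=(r_{j,k})$, $1\le j\le F$, $1\le k\le K$, over a finite set $S$ such that: (1) each cell is either empty or contains an element of $S$; (2) each column contains exactly $Z$ empty cells; (3) each element of $S$ occurs at most once in each row and at most once in each column; (4) if two distinct nonempty cells satisfy $r_{j_1,k_1}=r_{j_2,k_2}=t\in S$, then the cells $r_{j_1,k_2}$ and $r_{j_2,k_1}$ are empty. For integers $F,K\ge1$, $0\le Z\le F$, define $s(F,K,Z)=\min\{|S| : \text{there exists an } S\text{-PDA}(F,K,Z)\}$. *)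

theory Defs
  imports Main
begin

text \<open>An F x K array over symbol set S: rows 0..F-1, columns 0..K-1;
  None = empty cell, Some t = cell containing t.  Symbols are natural numbers
  (any finite symbol set can be relabelled injectively into nat).\<close>

definition is_PDA :: "nat set \<Rightarrow> nat \<Rightarrow> nat \<Rightarrow> nat \<Rightarrow> (nat \<Rightarrow> nat \<Rightarrow> nat option) \<Rightarrow> bool" where
  "is_PDA S F K Z r \<longleftrightarrow>
     finite S \<and>
     (\<forall>j<F. \<forall>k<K. \<forall>t. r j k = Some t \<longrightarrow> t \<in> S) \<and>
     (\<forall>k<K. card {j. j < F \<and> r j k = None} = Z) \<and>
     (\<forall>j<F. \<forall>k1<K. \<forall>k2<K. \<forall>t. r j k1 = Some t \<and> r j k2 = Some t \<longrightarrow> k1 = k2) \<and>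
     (\<forall>k<K. \<forall>j1<F. \<forall>j2<F. \<forall>t. r j1 k = Some t \<and> r j2 k = Some t \<longrightarrow> j1 = j2) \<and>
     (\<forall>j1<F. \<forall>j2<F. \<forall>k1<K. \<forall>k2<K. \<forall>t.
        (j1, k1) \<noteq> (j2, k2) \<and> r j1 k1 = Some t \<and> r j2 k2 = Some t \<longrightarrow>
        r j1 k2 = None \<and> r j2 k1 = None)"

definition s_PDA :: "nat \<Rightarrow> nat \<Rightarrow> nat \<Rightarrow> nat" where
  "s_PDA F K Z = (LEAST n. \<exists>S r. is_PDA S F K Z r \<and> card S = n)"

end

(* The recursion follows from the closed form s(F,F,2) = ceil(F(3F-7)/6), F >= 3: we show
   F(3F-7) <= 6 s(F,F,2) <= F(3F-7) + 4, and F(3F-7) - (F-3)(3F-16) = 6(3F-8).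

   Lower bound: a symbol occurs at most three times, so summing 6/mult over the F^2 - 2F filled cells
   gives 6|S| >= 3(F^2 - 2F) + (sum over rows of 3 singles - triples). A row with d empty cells holds at
   most (d choose 2) symbols of multiplicity three, and a row with few empty cells holds many symbols of
   multiplicity one; a discharging argument turns this into: the sum over rows of triples - 3 singles
   is at most F.

   Upper bound: group 3T rows into triangles and the remaining F - 3T <= 4 rows into pairs, make row j
   empty in columns j and rot^-1 j, let the three cells (j, rot j) of each triangle share a symbol, and
   fill the remaining cells with symbols occupying pairs of cells symmetric about the diagonal. *)

theory Submission
  imports Defs Complex_Main
begin

section \<open>Multiplicities of symbols\<close>

lemma is_PDA_I:
  assumes "finite S"
    and "\<And>j k t. j < F \<Longrightarrow> k < K \<Longrightarrow> r j k = Some t \<Longrightarrow> t \<in> S"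
    and "\<And>k. k < K \<Longrightarrow> card {j. j < F \<and> r j k = None} = Z"
    and "\<And>j k1 k2 t. j < F \<Longrightarrow> k1 < K \<Longrightarrow> k2 < K \<Longrightarrow> r j k1 = Some t \<Longrightarrow> r j k2 = Some t \<Longrightarrow> k1 = k2"
    and "\<And>k j1 j2 t. k < K \<Longrightarrow> j1 < F \<Longrightarrow> j2 < F \<Longrightarrow> r j1 k = Some t \<Longrightarrow> r j2 k = Some t \<Longrightarrow> j1 = j2"
    and "\<And>j1 j2 k1 k2 t. j1 < F \<Longrightarrow> j2 < F \<Longrightarrow> k1 < K \<Longrightarrow> k2 < K \<Longrightarrow> (j1, k1) \<noteq> (j2, k2) \<Longrightarrow>
      r j1 k1 = Some t \<Longrightarrow> r j2 k2 = Some t \<Longrightarrow> r j1 k2 = None \<and> r j2 k1 = None"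
  shows "is_PDA S F K Z r"
proof -
  have "\<forall>j<F. \<forall>k<K. \<forall>t. r j k = Some t \<longrightarrow> t \<in> S" using assms(2) by blast
  moreover have "\<forall>k<K. card {j. j < F \<and> r j k = None} = Z" using assms(3) by blast
  moreover have "\<forall>j<F. \<forall>k1<K. \<forall>k2<K. \<forall>t. r j k1 = Some t \<and> r j k2 = Some t \<longrightarrow> k1 = k2"
    using assms(4) by blast
  moreover have "\<forall>k<K. \<forall>j1<F. \<forall>j2<F. \<forall>t. r j1 k = Some t \<and> r j2 k = Some t \<longrightarrow> j1 = j2"
    using assms(5) by blast
  moreover have "\<forall>j1<F. \<forall>j2<F. \<forall>k1<K. \<forall>k2<K. \<forall>t.
      (j1, k1) \<noteq> (j2, k2) \<and> r j1 k1 = Some t \<and> r j2 k2 = Some t \<longrightarrow> r j1 k2 = None \<and> r j2 k1 = None"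
    using assms(6) by blast
  ultimately show ?thesis unfolding is_PDA_def using assms(1) by (intro conjI)
qed

locale PDA =
  fixes S :: "nat set" and F K Z :: nat and r :: "nat \<Rightarrow> nat \<Rightarrow> nat option"
  assumes is_PDA: "is_PDA S F K Z r"
begin

lemmas PDA_conditions = is_PDA[unfolded is_PDA_def]

lemma finite_symbols: "finite S"
  using PDA_conditions by (rule conjunct1)

lemma symbol_in: "j < F \<Longrightarrow> k < K \<Longrightarrow> r j k = Some t \<Longrightarrow> t \<in> S"
  using PDA_conditions[THEN conjunct2, THEN conjunct1] by blast

lemma row_unique: "j < F \<Longrightarrow> k1 < K \<Longrightarrow> k2 < K \<Longrightarrow> r j k1 = Some t \<Longrightarrow> r j k2 = Some t \<Longrightarrow> k1 = k2"
  using PDA_conditions[THEN conjunct2, THEN conjunct2, THEN conjunct2, THEN conjunct1] by blast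

lemma col_unique: "k < K \<Longrightarrow> j1 < F \<Longrightarrow> j2 < F \<Longrightarrow> r j1 k = Some t \<Longrightarrow> r j2 k = Some t \<Longrightarrow> j1 = j2"
  using PDA_conditions[THEN conjunct2, THEN conjunct2, THEN conjunct2, THEN conjunct2, THEN conjunct1]
  by blast

lemma cross_empty:
  "j1 < F \<Longrightarrow> j2 < F \<Longrightarrow> k1 < K \<Longrightarrow> k2 < K \<Longrightarrow> (j1, k1) \<noteq> (j2, k2) \<Longrightarrow>
   r j1 k1 = Some t \<Longrightarrow> r j2 k2 = Some t \<Longrightarrow> r j1 k2 = None \<and> r j2 k1 = None"
  using PDA_conditions[THEN conjunct2, THEN conjunct2, THEN conjunct2, THEN conjunct2, THEN conjunct2]
  by blast

definition col_empty :: "nat \<Rightarrow> nat set" where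
  "col_empty k = {j. j < F \<and> r j k = None}"

definition row_empty :: "nat \<Rightarrow> nat set" where
  "row_empty j = {k. k < K \<and> r j k = None}"

definition filled :: "nat \<Rightarrow> nat set" where
  "filled j = {k. k < K \<and> r j k \<noteq> None}"

definition occ :: "nat \<Rightarrow> (nat \<times> nat) set" where
  "occ t = {(j, k). j < F \<and> k < K \<and> r j k = Some t}"

definition mult :: "nat \<Rightarrow> nat \<Rightarrow> nat" where
  "mult j k = card (occ (the (r j k)))"

lemma finite_col_empty [simp]: "finite (col_empty k)"
  unfolding col_empty_def by auto

lemma finite_row_empty [simp]: "finite (row_empty j)"
  unfolding row_empty_def by auto

lemma finite_filled [simp]: "finite (filled j)"
  unfolding filled_def by auto

lemma finite_occ [simp]: "finite (occ t)"
  by (rule finite_subset[of _ "{..<F} \<times> {..<K}"]) (auto simp: occ_def)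

lemma card_col_empty: "k < K \<Longrightarrow> card (col_empty k) = Z"
  using PDA_conditions[THEN conjunct2, THEN conjunct2, THEN conjunct1] unfolding col_empty_def by blast

lemma filledE:
  assumes "k \<in> filled j"
  obtains t where "r j k = Some t" and "k < K"
  using assms unfolding filled_def by auto

lemma occ_iff: "(j, k) \<in> occ t \<longleftrightarrow> j < F \<and> k < K \<and> r j k = Some t"
  unfolding occ_def by simp

lemma card_occ_remove: "(j, k) \<in> occ t \<Longrightarrow> card (occ t) = Suc (card (occ t - {(j, k)}))"
  by (rule card.remove) simp_all

text \<open>Every further occurrence of the symbol at \<open>(j, k)\<close> lies in a row that is empty in column
  \<open>k\<close>, and distinct occurrences lie in distinct rows.\<close>
lemma mult_le: assumes "j < F" and "k \<in> filled j" shows "mult j k \<le> Suc Z"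
proof -
  from assms(2) obtain t where t: "r j k = Some t" and k: "k < K" by (rule filledE)
  have "inj_on fst (occ t - {(j, k)})"
    by (rule inj_onI) (auto simp: occ_iff intro: row_unique)
  moreover have "fst ` (occ t - {(j, k)}) \<subseteq> col_empty k"
  proof
    fix a assume "a \<in> fst ` (occ t - {(j, k)})"
    then obtain b where "(a, b) \<in> occ t" "(a, b) \<noteq> (j, k)" by force
    then show "a \<in> col_empty k"
      using cross_empty[OF assms(1) _ k _ _ t, of a b] unfolding occ_iff col_empty_def by auto
  qed
  ultimately have "card (occ t - {(j, k)}) \<le> Z"
    using card_inj_on_le card_col_empty[OF k] by (metis finite_col_empty)
  moreover have "card (occ t) = Suc (card (occ t - {(j, k)}))"
    using assms(1) k t by (intro card_occ_remove) (simp add: occ_iff)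
  ultimately show ?thesis unfolding mult_def using t by simp
qed

lemma mult_pos: assumes "j < F" and "k \<in> filled j" shows "mult j k \<ge> 1"
proof -
  from assms(2) obtain t where t: "r j k = Some t" and k: "k < K" by (rule filledE)
  then have "(j, k) \<in> occ t" using assms(1) by (simp add: occ_iff)
  then show ?thesis unfolding mult_def using t by (auto simp: Suc_le_eq card_gt_0_iff)
qed

lemma other_occurrenceE:
  assumes j: "j < F" and k: "k \<in> filled j" and m: "mult j k \<noteq> 1"
  obtains w k' where "w < F" "k' < K" "r w k' = r j k" "w \<noteq> j" "k' \<noteq> k"
    "r j k' = None" "r w k = None"
proof -
  from k obtain t where t: "r j k = Some t" and kK: "k < K" by (rule filledE)
  have jk: "(j, k) \<in> occ t" using j kK t by (simp add: occ_iff)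
  have "card (occ t) \<noteq> 1" using m t unfolding mult_def by simp
  then have "occ t - {(j, k)} \<noteq> {}" using card_occ_remove[OF jk] by auto
  then obtain w k' where wk: "(w, k') \<in> occ t" "(w, k') \<noteq> (j, k)" by auto
  then have w: "w < F" "k' < K" "r w k' = Some t" by (auto simp: occ_iff)
  have "w \<noteq> j" using row_unique[OF j kK w(2) t] w wk(2) by auto
  moreover have "k' \<noteq> k" using col_unique[OF kK j w(1) t] w wk(2) by auto
  moreover have "r j k' = None" "r w k = None" using cross_empty[OF j w(1) kK w(2) _ t w(3)] wk(2) by auto
  ultimately show ?thesis using that w t by auto
qed

definition cells :: "(nat \<times> nat) set" where
  "cells = Sigma {..<F} filled"

definition symbol :: "nat \<times> nat \<Rightarrow> nat" where
  "symbol c = the (r (fst c) (snd c))"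

lemma symbols_subset: "symbol ` cells \<subseteq> S"
  unfolding cells_def filled_def symbol_def using symbol_in by auto

lemma card_symbols_eq: "real (card (symbol ` cells)) = (\<Sum>j<F. \<Sum>k\<in>filled j. 1 / real (mult j k))"
proof -
  have fib: "{c \<in> cells. symbol c = t} = occ t" if "t \<in> symbol ` cells" for t
    using that unfolding cells_def filled_def occ_def symbol_def by auto
  have "(\<Sum>c\<in>cells. 1 / real (card (occ (symbol c))))
      = (\<Sum>t\<in>symbol ` cells. \<Sum>c\<in>{c \<in> cells. symbol c = t}. 1 / real (card (occ (symbol c))))"
    by (rule sum.image_gen) (simp add: cells_def)
  also have "\<dots> = (\<Sum>t\<in>symbol ` cells. 1)"
  proof (rule sum.cong[OF refl])
    fix t assume t: "t \<in> symbol ` cells"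
    have "occ t \<noteq> {}" using fib[OF t] t by blast
    moreover have "symbol c = t" if "c \<in> occ t" for c
      using that unfolding occ_def symbol_def by auto
    ultimately show "(\<Sum>c\<in>{c \<in> cells. symbol c = t}. 1 / real (card (occ (symbol c)))) = 1"
      unfolding fib[OF t] by simp
  qed
  finally have "real (card (symbol ` cells)) = (\<Sum>c\<in>cells. 1 / real (card (occ (symbol c))))"
    by simp
  also have "\<dots> = (\<Sum>j<F. \<Sum>k\<in>filled j. 1 / real (mult j k))"
    unfolding cells_def mult_def symbol_def by (subst sum.Sigma) (auto simp: case_prod_beta)
  finally show ?thesis .
qed

lemma sum_card_row_empty: "(\<Sum>j<F. card (row_empty j)) = Z * K"
proof -
  have "(\<Sum>j<F. card (row_empty j)) = card (Sigma {..<F} row_empty)" by simp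
  also have "Sigma {..<F} row_empty = prod.swap ` Sigma {..<K} col_empty"
    unfolding row_empty_def col_empty_def by auto
  also have "card \<dots> = (\<Sum>k<K. card (col_empty k))" by (simp add: card_image)
  also have "\<dots> = Z * K" by (simp add: card_col_empty)
  finally show ?thesis .
qed

lemma card_filled: "card (filled j) = K - card (row_empty j)"
proof -
  have "filled j = {..<K} - row_empty j" "row_empty j \<subseteq> {..<K}"
    unfolding filled_def row_empty_def by auto
  then show ?thesis by (simp add: card_Diff_subset)
qed

lemma card_row_empty_le: "card (row_empty j) \<le> K"
  using card_mono[of "{..<K}" "row_empty j"] unfolding row_empty_def by auto

end

section \<open>The lower bound for square arrays with two empty cells per column\<close>

lemma sum_nonpos_by_discharging:
  fixes f :: "'a \<Rightarrow> int"
  assumes "finite I" and "P \<subseteq> I" and "L \<subseteq> I" and "P \<inter> L = {}" and "0 \<le> c"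
    and "\<And>v. v \<in> P \<Longrightarrow> f v \<le> c"
    and "\<And>v. v \<in> L \<Longrightarrow> f v \<le> - int m * c"
    and "\<And>v. v \<in> I - P - L \<Longrightarrow> f v \<le> 0"
    and "card P \<le> m * card L"
  shows "sum f I \<le> 0"
proof -
  have fin: "finite P" "finite L" using assms(1-3) finite_subset by auto
  have "sum f I = sum f (P \<union> L) + sum f (I - (P \<union> L))"
    using assms(1-3) by (metis Un_least sum.subset_diff add.commute)
  also have "sum f (P \<union> L) = sum f P + sum f L"
    using fin assms(4) by (rule sum.union_disjoint)
  finally have "sum f I = sum f P + sum f L + sum f (I - P - L)"
    by (simp add: Diff_eq Int_assoc)
  also have "\<dots> \<le> int (card P) * c + int (card L) * (- int m * c) + 0"
    using sum_bounded_above[of P f c] sum_bounded_above[of L f "- int m * c"]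
      sum_nonpos[of "I - P - L" f] assms(6-8) by (intro add_mono) auto
  also have "\<dots> \<le> 0"
    using mult_right_mono[of "int (card P)" "int m * int (card L)" c] assms(5,9)
    by (simp add: algebra_simps flip: of_nat_mult)
  finally show ?thesis .
qed

locale PDA_FF2 = PDA S F F 2 r for S :: "nat set" and F :: nat and r :: "nat \<Rightarrow> nat \<Rightarrow> nat option"
begin

definition n_empty :: "nat \<Rightarrow> nat" where
  "n_empty j = card (row_empty j)"

definition singles :: "nat \<Rightarrow> nat" where
  "singles j = card {k \<in> filled j. mult j k = 1}"

definition triples :: "nat \<Rightarrow> nat" where
  "triples j = card {k \<in> filled j. mult j k = 3}"

definition covered :: "nat set \<Rightarrow> nat" where
  "covered W = card {k. k < F \<and> col_empty k \<subseteq> W}"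

definition neighbours :: "nat \<Rightarrow> nat set" where
  "neighbours v = {w. w \<noteq> v \<and> (\<exists>k<F. v \<in> col_empty k \<and> w \<in> col_empty k)}"

lemma sum_n_empty: "(\<Sum>j<F. n_empty j) = 2 * F"
  unfolding n_empty_def using sum_card_row_empty by simp

lemma sum_card_filled: "(\<Sum>j<F. real (card (filled j))) = real F * real F - 2 * real F"
proof -
  have "(\<Sum>j<F. real (card (filled j))) = (\<Sum>j<F. real F - real (n_empty j))"
    by (rule sum.cong) (auto simp: card_filled n_empty_def card_row_empty_le of_nat_diff)
  also have "\<dots> = real F * real F - real (\<Sum>j<F. n_empty j)" by (simp add: sum_subtractf)
  finally show ?thesis by (simp add: sum_n_empty)
qed

text \<open>With multiplicities in \<open>{1, 2, 3}\<close>, \<open>6 / m = 3 + 3 [m = 1] - [m = 3]\<close>.\<close>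
lemma six_card_symbols:
  "6 * real (card (symbol ` cells))
     = 3 * (real F * real F - 2 * real F) + (\<Sum>j<F. 3 * real (singles j) - real (triples j))"
proof -
  have row: "6 * (\<Sum>k\<in>filled j. 1 / real (mult j k))
      = 3 * real (card (filled j)) + 3 * real (singles j) - real (triples j)" if j: "j < F" for j
  proof -
    have "(\<Sum>k\<in>filled j. 6 * (1 / real (mult j k)))
        = (\<Sum>k\<in>filled j. 3 + 3 * of_bool (mult j k = 1) - of_bool (mult j k = 3))"
    proof (rule sum.cong[OF refl])
      fix k assume k: "k \<in> filled j"
      have "mult j k \<in> {1, 2, 3}" using mult_pos[OF j k] mult_le[OF j k] by auto
      then show "6 * (1 / real (mult j k)) = 3 + 3 * of_bool (mult j k = 1) - of_bool (mult j k = 3)"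
        by auto
    qed
    also have "\<dots> = 3 * real (card (filled j)) + 3 * real (singles j) - real (triples j)"
      unfolding singles_def triples_def
      by (simp add: sum.distrib sum_subtractf flip: sum_distrib_left, simp add: sum.If_cases Int_def)
    finally show ?thesis by (simp add: sum_distrib_left)
  qed
  have "6 * real (card (symbol ` cells)) = (\<Sum>j<F. 6 * (\<Sum>k\<in>filled j. 1 / real (mult j k)))"
    by (simp add: card_symbols_eq sum_distrib_left)
  also have "\<dots> = (\<Sum>j<F. 3 * real (card (filled j)) + (3 * real (singles j) - real (triples j)))"
    by (rule sum.cong) (simp_all add: row)
  finally show ?thesis by (simp add: sum.distrib sum_card_filled flip: sum_distrib_left)
qed

lemma covered_filled: "j < F \<Longrightarrow> j \<notin> W \<Longrightarrow> {k. k < F \<and> col_empty k \<subseteq> W} \<subseteq> filled j"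
  unfolding filled_def col_empty_def by auto

text \<open>A repeated symbol in row \<open>j \<notin> W\<close> of a column whose empty rows lie in \<open>W\<close> reappears at some
  \<open>(w, k')\<close> with \<open>w \<in> W - col_empty k'\<close> and \<open>k'\<close> empty in row \<open>j\<close>; the cell \<open>(w, k')\<close> determines
  the symbol and hence the column.\<close>
lemma card_covered_repeated_le:
  assumes j: "j < F" "j \<notin> W" and W: "W \<subseteq> {..<F}"
  shows "card {k. k < F \<and> col_empty k \<subseteq> W \<and> mult j k \<noteq> 1}
    \<le> (\<Sum>k'\<in>row_empty j. card (W - col_empty k'))"
proof -
  define A where "A = {k. k < F \<and> col_empty k \<subseteq> W \<and> mult j k \<noteq> 1}"
  define T where "T = Sigma (row_empty j) (\<lambda>k'. W - col_empty k')"
  have finW: "finite W" using W finite_subset by blast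
  have A_filled: "A \<subseteq> filled j" using covered_filled[OF j] unfolding A_def by auto
  have "\<forall>k \<in> A. \<exists>p. p \<in> T \<and> r (snd p) (fst p) = r j k"
  proof
    fix k assume "k \<in> A"
    then have k: "k \<in> filled j" "mult j k \<noteq> 1" "col_empty k \<subseteq> W"
      using A_filled unfolding A_def by auto
    obtain w k' where p: "w < F" "k' < F" "r w k' = r j k" "w \<noteq> j" "k' \<noteq> k"
      "r j k' = None" "r w k = None"
      using other_occurrenceE[OF j(1) k(1,2)] .
    have "w \<in> W" using k(1,3) p unfolding filled_def col_empty_def by auto
    moreover have "w \<notin> col_empty k'" using k(1) p unfolding filled_def col_empty_def by auto
    ultimately have "(k', w) \<in> T" using p unfolding T_def row_empty_def by auto
    then show "\<exists>p. p \<in> T \<and> r (snd p) (fst p) = r j k" using p by force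
  qed
  then have "\<exists>f. \<forall>k \<in> A. f k \<in> T \<and> r (snd (f k)) (fst (f k)) = r j k" by (rule bchoice)
  then obtain f where f: "\<And>k. k \<in> A \<Longrightarrow> f k \<in> T \<and> r (snd (f k)) (fst (f k)) = r j k"
    by blast
  have "inj_on f A"
  proof (rule inj_onI)
    fix k1 k2 assume k1: "k1 \<in> A" and k2: "k2 \<in> A" and "f k1 = f k2"
    then have "r j k1 = r j k2" using f[OF k1] f[OF k2] by simp
    moreover obtain t where "r j k1 = Some t" "k1 < F" using k1 A_filled filledE by blast
    moreover have "k2 < F" using k2 unfolding A_def by auto
    ultimately show "k1 = k2" using row_unique[OF j(1), of k1 k2] by (metis (no_types))
  qed
  moreover have "finite T" unfolding T_def using finW by auto
  ultimately have "card A \<le> card T" using f by (intro card_inj_on_le) auto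
  also have "card T = (\<Sum>k'\<in>row_empty j. card (W - col_empty k'))"
    unfolding T_def using finW by simp
  finally show ?thesis unfolding A_def .
qed

lemma covered_le:
  assumes j: "j < F" "j \<notin> W" and W: "W \<subseteq> {..<F}"
  shows "covered W \<le> singles j + (\<Sum>k'\<in>row_empty j. card (W - col_empty k'))"
proof -
  define A where "A = {k. k < F \<and> col_empty k \<subseteq> W}"
  have "card A \<le> card {k \<in> A. mult j k = 1} + card {k \<in> A. mult j k \<noteq> 1}"
    using card_Un_le[of "{k \<in> A. mult j k = 1}" "{k \<in> A. mult j k \<noteq> 1}"]
    by (simp add: Collect_disj_eq[symmetric] conj_disj_distribL[symmetric])
  moreover have "card {k \<in> A. mult j k = 1} \<le> singles j"
    unfolding singles_def A_def using covered_filled[OF j] by (intro card_mono) auto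
  moreover have "{k \<in> A. mult j k \<noteq> 1} = {k. k < F \<and> col_empty k \<subseteq> W \<and> mult j k \<noteq> 1}"
    unfolding A_def by auto
  then have "card {k \<in> A. mult j k \<noteq> 1} \<le> (\<Sum>k'\<in>row_empty j. card (W - col_empty k'))"
    using card_covered_repeated_le[OF assms] by simp
  ultimately show ?thesis unfolding covered_def A_def[symmetric] by linarith
qed

lemma covered_le_card:
  assumes "j < F" "j \<notin> W" and "W \<subseteq> {..<F}"
  shows "covered W \<le> singles j + n_empty j * card W"
proof -
  have "(\<Sum>k\<in>row_empty j. card (W - col_empty k)) \<le> (\<Sum>k\<in>row_empty j. card W)"
    using assms(3) finite_subset by (intro sum_mono card_mono) auto
  then show ?thesis using covered_le[OF assms] unfolding n_empty_def by simp
qed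

lemma singles_lower: assumes v: "v < F" shows "F - n_empty v \<le> singles v + n_empty v * (F - 2)"
proof -
  define W where "W = {..<F} - {v}"
  have "covered W = card (filled v)"
  proof -
    have "{k. k < F \<and> col_empty k \<subseteq> W} = filled v"
      unfolding W_def col_empty_def filled_def using v by auto
    then show ?thesis unfolding covered_def by simp
  qed
  moreover have "card (W - col_empty k) = F - 2" if "k \<in> row_empty v" for k
  proof -
    have "k < F" "v \<in> col_empty k" using that v unfolding row_empty_def col_empty_def by auto
    moreover have "W - col_empty k = {..<F} - col_empty k" "col_empty k \<subseteq> {..<F}"
      using \<open>v \<in> col_empty k\<close> unfolding W_def col_empty_def by auto
    ultimately show ?thesis using card_col_empty by (simp add: card_Diff_subset)
  qed
  moreover have "v \<notin> W" "W \<subseteq> {..<F}" unfolding W_def by auto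
  ultimately show ?thesis
    using covered_le[of v W] v card_filled[of v] unfolding n_empty_def by simp
qed

lemma col_empty_eq_pair:
  assumes "k < F" and "a \<in> col_empty k" and "b \<in> col_empty k" and "a \<noteq> b"
  shows "col_empty k = {a, b}"
proof -
  have "{a, b} \<subseteq> col_empty k" "card {a, b} = card (col_empty k)"
    using assms card_col_empty[OF assms(1)] by auto
  then show ?thesis by (intro card_subset_eq[symmetric]) auto
qed

lemma triple_occ:
  assumes v: "v < F" and k: "k \<in> filled v" and m: "mult v k = 3"
  obtains a y b z where "occ (the (r v k)) = {(v, k), (a, y), (b, z)}"
    and "r a y = r v k" "r b z = r v k" "y < F" "z < F" "a \<noteq> v" "b \<noteq> v" "y \<noteq> z"
    and "col_empty k = {a, b}" "col_empty y = {v, b}" "col_empty z = {v, a}"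
proof -
  from k obtain t where t: "r v k = Some t" and kF: "k < F" by (rule filledE)
  have vk: "(v, k) \<in> occ t" using v kF t by (simp add: occ_iff)
  have "card (occ t - {(v, k)}) = 2" using m t card_occ_remove[OF vk] unfolding mult_def by simp
  then obtain p q where pq: "occ t - {(v, k)} = {p, q}" "p \<noteq> q" unfolding card_2_iff by blast
  obtain a y where p: "p = (a, y)" by (cases p)
  obtain b z where q: "q = (b, z)" by (cases q)
  have "(a, y) \<in> occ t - {(v, k)}" "(b, z) \<in> occ t - {(v, k)}" using pq(1) p q by blast+
  then have A: "a < F" "y < F" "r a y = Some t" "(a, y) \<noteq> (v, k)"
    and B: "b < F" "z < F" "r b z = Some t" "(b, z) \<noteq> (v, k)"
    by (simp_all add: occ_iff)
  have av: "a \<noteq> v" using row_unique[OF v kF A(2) t] A(3,4) by (cases "a = v") auto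
  have bv: "b \<noteq> v" using row_unique[OF v kF B(2) t] B(3,4) by (cases "b = v") auto
  have ab: "a \<noteq> b" using row_unique[OF A(1) A(2) B(2) A(3)] B(3) pq(2) p q by (cases "a = b") auto
  have yz: "y \<noteq> z" using col_unique[OF A(2) A(1) B(1) A(3)] B(3) pq(2) p q by (cases "y = z") auto
  have ne: "(v, k) \<noteq> (a, y)" "(v, k) \<noteq> (b, z)" "(a, y) \<noteq> (b, z)" using A(4) B(4) pq(2) p q by auto
  have "r v y = None \<and> r a k = None" by (rule cross_empty[OF v A(1) kF A(2) ne(1) t A(3)])
  moreover have "r v z = None \<and> r b k = None" by (rule cross_empty[OF v B(1) kF B(2) ne(2) t B(3)])
  moreover have "r a z = None \<and> r b y = None" by (rule cross_empty[OF A(1) B(1) A(2) B(2) ne(3) A(3) B(3)])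
  ultimately have "a \<in> col_empty k" "b \<in> col_empty k" "v \<in> col_empty y" "b \<in> col_empty y"
    "v \<in> col_empty z" "a \<in> col_empty z"
    using v A(1) B(1) unfolding col_empty_def by simp_all
  then have cols: "col_empty k = {a, b}" "col_empty y = {v, b}" "col_empty z = {v, a}"
    using col_empty_eq_pair[OF kF, of a b] col_empty_eq_pair[OF A(2), of v b]
      col_empty_eq_pair[OF B(2), of v a] ab av bv by simp_all
  have "occ t = insert (v, k) (occ t - {(v, k)})" using vk by auto
  then have occ_eq: "occ (the (r v k)) = {(v, k), (a, y), (b, z)}" unfolding pq(1) p q t by simp
  have same: "r a y = r v k" "r b z = r v k" using A(3) B(3) t by simp_all
  show ?thesis by (rule that[OF occ_eq same A(2) B(2) av bv yz cols])
qed

lemma card_neighbours_le: assumes v: "v < F" shows "card (neighbours v) \<le> n_empty v"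
proof -
  have "neighbours v \<subseteq> (\<Union>k\<in>row_empty v. col_empty k - {v})"
    unfolding neighbours_def row_empty_def col_empty_def by auto
  then have "card (neighbours v) \<le> card (\<Union>k\<in>row_empty v. col_empty k - {v})"
    by (intro card_mono) auto
  also have "\<dots> \<le> (\<Sum>k\<in>row_empty v. card (col_empty k - {v}))" by (rule card_UN_le) simp
  also have "\<dots> = (\<Sum>k\<in>row_empty v. 1)"
  proof (rule sum.cong[OF refl])
    fix k assume "k \<in> row_empty v"
    then have "k < F" "v \<in> col_empty k" using v unfolding row_empty_def col_empty_def by auto
    then show "card (col_empty k - {v}) = 1" by (simp add: card_col_empty)
  qed
  finally show ?thesis unfolding n_empty_def by simp
qed

lemma triples_le_covered_neighbours: assumes v: "v < F" shows "triples v \<le> covered (neighbours v)"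
proof -
  have "{k \<in> filled v. mult v k = 3} \<subseteq> {k. k < F \<and> col_empty k \<subseteq> neighbours v}"
  proof
    fix k assume "k \<in> {k \<in> filled v. mult v k = 3}"
    then have k: "k \<in> filled v" "mult v k = 3" by auto
    obtain a y b z where o: "occ (the (r v k)) = {(v, k), (a, y), (b, z)}"
      "r a y = r v k" "r b z = r v k" "y < F" "z < F" "a \<noteq> v" "b \<noteq> v" "y \<noteq> z"
      "col_empty k = {a, b}" "col_empty y = {v, b}" "col_empty z = {v, a}"
      by (rule triple_occ[OF v k])
    have "v \<in> col_empty z" "a \<in> col_empty z" "v \<in> col_empty y" "b \<in> col_empty y"
      using o(10,11) by auto
    then have "a \<in> neighbours v" "b \<in> neighbours v"
      using o(4-7) unfolding neighbours_def by blast+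
    then show "k \<in> {k. k < F \<and> col_empty k \<subseteq> neighbours v}" using o(9) k(1) by (auto elim: filledE)
  qed
  then show ?thesis unfolding triples_def covered_def by (intro card_mono) auto
qed

definition other_cols :: "nat \<Rightarrow> nat \<Rightarrow> nat set" where
  "other_cols v k = snd ` occ (the (r v k)) - {k}"

lemma other_cols_eq:
  assumes "k \<in> filled v" and "occ (the (r v k)) = {(v, k), (a, y), (b, z)}"
    and "col_empty y = {v, b}" and "col_empty z = {v, a}"
  shows "other_cols v k = {y, z}"
proof -
  have "r v y = None" "r v z = None" using assms(3,4) unfolding col_empty_def by blast+
  moreover have "r v k \<noteq> None" using assms(1) unfolding filled_def by auto
  ultimately have "y \<noteq> k" "z \<noteq> k" by auto
  then show ?thesis unfolding other_cols_def assms(2) by auto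
qed

text \<open>A symbol of multiplicity 3 in row \<open>v\<close> is recovered from the two columns of its other
  occurrences, which are both empty in row \<open>v\<close>.\<close>
lemma inj_on_other_cols: assumes v: "v < F" shows "inj_on (other_cols v) {k \<in> filled v. mult v k = 3}"
proof (rule inj_onI)
  fix k1 k2 assume k1: "k1 \<in> {k \<in> filled v. mult v k = 3}" and k2: "k2 \<in> {k \<in> filled v. mult v k = 3}"
    and e: "other_cols v k1 = other_cols v k2"
  obtain a y b z where o: "occ (the (r v k1)) = {(v, k1), (a, y), (b, z)}"
    "r a y = r v k1" "r b z = r v k1" "y < F" "z < F" "a \<noteq> v" "b \<noteq> v" "y \<noteq> z"
    "col_empty k1 = {a, b}" "col_empty y = {v, b}" "col_empty z = {v, a}"
    using k1 by (auto intro: triple_occ[OF v])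
  obtain a' y' b' z' where o': "occ (the (r v k2)) = {(v, k2), (a', y'), (b', z')}"
    "r a' y' = r v k2" "r b' z' = r v k2" "y' < F" "z' < F" "a' \<noteq> v" "b' \<noteq> v" "y' \<noteq> z'"
    "col_empty k2 = {a', b'}" "col_empty y' = {v, b'}" "col_empty z' = {v, a'}"
    using k2 by (auto intro: triple_occ[OF v])
  have "{y, z} = {y', z'}"
    using e other_cols_eq[OF _ o(1,10,11)] other_cols_eq[OF _ o'(1,10,11)] k1 k2 by simp
  then consider "y' = y" "z' = z" | "y' = z" "z' = y" by (auto simp: doubleton_eq_iff)
  then have "r v k1 = r v k2"
  proof cases
    case 1
    then have "{v, a'} = {v, a}" using o(11) o'(11) by simp
    then have "a' = a" using o(6) o'(6) by (auto simp: doubleton_eq_iff)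
    then show ?thesis using 1 o(2) o'(2) by simp
  next
    case 2
    then have "{v, a'} = {v, b}" using o(10) o'(11) by simp
    then have "a' = b" using o(7) o'(6) by (auto simp: doubleton_eq_iff)
    then show ?thesis using 2 o(3) o'(2) by simp
  qed
  moreover obtain t where "r v k1 = Some t" "k1 < F" using k1 by (auto elim: filledE)
  moreover have "k2 < F" using k2 unfolding filled_def by auto
  ultimately show "k1 = k2" using row_unique[OF v, of k1 k2] by (metis (no_types))
qed

lemma triples_le_choose: assumes v: "v < F" shows "triples v \<le> n_empty v choose 2"
proof -
  have "other_cols v ` {k \<in> filled v. mult v k = 3} \<subseteq> {B. B \<subseteq> row_empty v \<and> card B = 2}"
  proof
    fix B assume "B \<in> other_cols v ` {k \<in> filled v. mult v k = 3}"
    then obtain k where k: "k \<in> filled v" "mult v k = 3" "B = other_cols v k" by auto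
    obtain a y b z where o: "occ (the (r v k)) = {(v, k), (a, y), (b, z)}"
      "r a y = r v k" "r b z = r v k" "y < F" "z < F" "a \<noteq> v" "b \<noteq> v" "y \<noteq> z"
      "col_empty k = {a, b}" "col_empty y = {v, b}" "col_empty z = {v, a}"
      by (rule triple_occ[OF v k(1,2)])
    have "v \<in> col_empty y" "v \<in> col_empty z" using o(10,11) by auto
    then have "{y, z} \<subseteq> row_empty v" using o(4,5) unfolding row_empty_def col_empty_def by auto
    then show "B \<in> {B. B \<subseteq> row_empty v \<and> card B = 2}"
      using other_cols_eq[OF k(1) o(1,10,11)] k(3) o(8) by simp
  qed
  then have "triples v \<le> card {B. B \<subseteq> row_empty v \<and> card B = 2}"
    unfolding triples_def using inj_on_other_cols[OF v] by (intro card_inj_on_le) auto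
  also have "\<dots> = n_empty v choose 2" unfolding n_empty_def by (rule n_subsets) simp
  finally show ?thesis .
qed

lemma triples_le_few_empty:
  assumes "v < F"
  shows "n_empty v \<le> 1 \<Longrightarrow> triples v = 0" and "n_empty v = 2 \<Longrightarrow> triples v \<le> 1"
    and "n_empty v = 3 \<Longrightarrow> triples v \<le> 3" and "n_empty v = 4 \<Longrightarrow> triples v \<le> 6"
  using triples_le_choose[OF assms] by (auto simp: choose_two le_Suc_eq)

lemma triples_le_filled: "triples v \<le> F - n_empty v"
proof -
  have "triples v \<le> card (filled v)" unfolding triples_def by (intro card_mono) auto
  then show ?thesis by (simp add: card_filled n_empty_def)
qed

text \<open>Rows with at least five empty cells may carry positive charge; it is discharged onto the
  rows with at most two empty cells, see \<open>charge_le_excess\<close>.\<close>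
definition excess :: "nat \<Rightarrow> int" where
  "excess v = int (triples v) + 7 - 4 * int (n_empty v)"

definition charge :: "nat \<Rightarrow> int" where
  "charge v = excess v - 3 * int (singles v)"

definition excessive :: "nat set" where
  "excessive = {v. v < F \<and> 3 \<le> n_empty v \<and> 0 < excess v}"

lemma sum_charge: "(\<Sum>v<F. charge v) = (\<Sum>v<F. int (triples v) - 3 * int (singles v)) - int F"
proof -
  have "(\<Sum>v<F. int (n_empty v)) = 2 * int F" using sum_n_empty by (metis of_nat_mult of_nat_numeral of_nat_sum)
  then show ?thesis
    unfolding charge_def excess_def by (simp add: sum.distrib sum_subtractf flip: sum_distrib_left)
qed

lemma charge_nonpos:
  assumes v: "v < F" and F: "3 \<le> F" and "v \<notin> excessive"
  shows "charge v \<le> 0"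
proof -
  have sg: "F - n_empty v \<le> singles v + n_empty v * (F - 2)" by (rule singles_lower[OF v])
  consider "n_empty v = 0" | "n_empty v = 1" | "n_empty v = 2" | "n_empty v = 3" | "n_empty v = 4"
    | "5 \<le> n_empty v" by linarith
  then show ?thesis
  proof cases
    case 6
    then show ?thesis using assms unfolding charge_def excessive_def by auto
  qed (use sg F triples_le_few_empty[OF v] in \<open>auto simp: charge_def excess_def\<close>)
qed

lemma excessive_many_empty: "v \<in> excessive \<Longrightarrow> 5 \<le> n_empty v"
  using triples_le_few_empty(3,4)[of v] unfolding excessive_def excess_def by fastforce

lemma excess_le: "excess v \<le> int F + 7 - 5 * int (n_empty v)"
  using triples_le_filled[of v] card_row_empty_le[of v] unfolding excess_def n_empty_def by linarith

text \<open>A row \<open>v\<close> with at most two empty cells, sharing no empty column with \<open>w\<close>, must contain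
  single symbols in almost all the columns counted by \<open>triples w\<close>.\<close>
lemma charge_le_excess:
  assumes w: "w < F" "4 \<le> n_empty w" and v: "v < F" "n_empty v \<le> 2" "v \<notin> neighbours w"
  shows "charge v \<le> - 3 * excess w"
proof -
  have "triples w \<le> covered (neighbours w)" by (rule triples_le_covered_neighbours[OF w(1)])
  also have "\<dots> \<le> singles v + n_empty v * card (neighbours w)"
    by (rule covered_le_card[OF v(1,3)]) (auto simp: neighbours_def col_empty_def)
  also have "\<dots> \<le> singles v + n_empty v * n_empty w"
    using card_neighbours_le[OF w(1)] by simp
  finally have tw: "int (triples w) \<le> int (singles v) + int (n_empty v) * int (n_empty w)"
    unfolding of_nat_mult[symmetric] of_nat_add[symmetric] of_nat_le_iff .
  consider "n_empty v = 0" | "n_empty v = 1" | "n_empty v = 2" using v(2) by linarith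
  then show ?thesis
    using tw w(2) triples_le_few_empty(1,2)[OF v(1)] unfolding charge_def excess_def
    by cases simp_all
qed

lemma card_many_empty_le:
  "int F + 2 * int (card {v. v < F \<and> 5 \<le> n_empty v}) \<le> 3 * int (card {v. v < F \<and> n_empty v \<le> 2})"
proof -
  have "(\<Sum>v<F. 3 + 2 * of_bool (5 \<le> n_empty v) - 3 * of_bool (n_empty v \<le> 2) :: int)
      \<le> (\<Sum>v<F. int (n_empty v))"
    by (intro sum_mono) auto
  also have "\<dots> = 2 * int F" using sum_n_empty by (metis of_nat_mult of_nat_numeral of_nat_sum)
  finally show ?thesis
    by (simp add: sum.distrib sum_subtractf flip: sum_distrib_left)
      (simp add: sum.If_cases Int_def lessThan_def conj_commute)
qed

lemma card_excessive_le:
  assumes w: "w \<in> excessive"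
  shows "card excessive \<le> 3 * card ({v. v < F \<and> n_empty v \<le> 2} - neighbours w)"
proof -
  have wF: "w < F" and five: "5 \<le> n_empty w" and pos: "0 < excess w"
    using w excessive_many_empty unfolding excessive_def by auto
  have "excessive \<subseteq> {v. v < F \<and> 5 \<le> n_empty v}" using excessive_many_empty
    unfolding excessive_def by auto
  then have "card excessive \<le> card {v. v < F \<and> 5 \<le> n_empty v}" by (intro card_mono) auto
  moreover have "1 \<le> card excessive" using w by (auto simp: excessive_def Suc_le_eq card_gt_0_iff)
  moreover have "card {v. v < F \<and> n_empty v \<le> 2} - card (neighbours w)
      \<le> card ({v. v < F \<and> n_empty v \<le> 2} - neighbours w)"
    by (rule diff_card_le_card_Diff) (auto simp: neighbours_def col_empty_def)
  moreover have "card (neighbours w) \<le> n_empty w" by (rule card_neighbours_le[OF wF])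
  moreover have "5 * int (n_empty w) \<le> int F + 6" using pos excess_le[of w] by linarith
  ultimately show ?thesis using card_many_empty_le five by linarith
qed

lemma sum_charge_nonpos: assumes F: "3 \<le> F" shows "(\<Sum>v<F. charge v) \<le> 0"
proof (cases "excessive = {}")
  case True
  then show ?thesis using charge_nonpos[OF _ F] by (intro sum_nonpos) auto
next
  case False
  have fin: "finite excessive" unfolding excessive_def by auto
  have "Max (excess ` excessive) \<in> excess ` excessive" using fin False by simp
  then obtain w where w: "w \<in> excessive" and w_Max: "excess w = Max (excess ` excessive)" by auto
  have w_max: "excess v \<le> excess w" if "v \<in> excessive" for v using fin that unfolding w_Max by simp
  have wF: "w < F" and five: "5 \<le> n_empty w" and pos: "0 < excess w"
    using w excessive_many_empty unfolding excessive_def by auto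
  let ?L = "{v. v < F \<and> n_empty v \<le> 2} - neighbours w"
  show ?thesis
  proof (rule sum_nonpos_by_discharging[where P = excessive and L = ?L and c = "excess w" and m = 3])
    show "excessive \<subseteq> {..<F}" "?L \<subseteq> {..<F}" "excessive \<inter> ?L = {}"
      unfolding excessive_def by auto
    show "charge v \<le> excess w" if "v \<in> excessive" for v
      using w_max[OF that] unfolding charge_def by simp
    show "charge v \<le> - int 3 * excess w" if "v \<in> ?L" for v
      using charge_le_excess[OF wF, of v] that five by simp
    show "charge v \<le> 0" if "v \<in> {..<F} - excessive - ?L" for v
      using charge_nonpos[OF _ F] that by auto
    show "card excessive \<le> 3 * card ?L" by (rule card_excessive_le[OF w])
  qed (use pos in auto)
qed

lemma card_symbols_lower: assumes F: "3 \<le> F" shows "int F * (3 * int F - 7) \<le> 6 * int (card S)"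
proof -
  have "real_of_int (\<Sum>v<F. int (triples v) - 3 * int (singles v)) \<le> real F"
    using sum_charge_nonpos[OF F] unfolding sum_charge by linarith
  then have "3 * (real F * real F - 2 * real F) - real F \<le> 6 * real (card (symbol ` cells))"
    unfolding six_card_symbols by (simp add: sum_subtractf sum_distrib_left)
  also have "\<dots> \<le> 6 * real (card S)"
    using card_mono[OF finite_symbols symbols_subset] by simp
  finally have "real_of_int (int F * (3 * int F - 7)) \<le> real_of_int (6 * int (card S))"
    by (simp add: algebra_simps)
  then show ?thesis by (simp only: of_int_le_iff)
qed

end

section \<open>The construction\<close>

text \<open>The rows below \<open>3 * T\<close> form \<open>T\<close> triangles \<open>{3q, 3q+1, 3q+2}\<close>, permuted cyclically; the
  remaining rows form consecutive pairs, which are swapped.\<close>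
definition rot :: "nat \<Rightarrow> nat \<Rightarrow> nat" where
  "rot T v = (if v < 3 * T then (if v mod 3 = 2 then v - 2 else v + 1)
              else if even (v - 3 * T) then v + 1 else v - 1)"

lemma rot_triangle:
  assumes "v < 3 * T"
  shows "rot T v < 3 * T" "rot T v div 3 = v div 3" "rot T (rot T (rot T v)) = v" "rot T (rot T v) \<noteq> v"
    "rot T v \<noteq> v"
proof -
  obtain q a where v: "v = 3 * q + a" "a < 3" "q < T"
    using assms by (metis div_mult_mod_eq mod_less_divisor mult.commute zero_less_numeral
        less_mult_imp_div_less)
  have rot: "rot T (3 * q + b) = 3 * q + (if b = 2 then 0 else b + 1)" if "b < 3" for b
    using that v(3) unfolding rot_def by auto
  have "a = 0 \<or> a = 1 \<or> a = 2" using v(2) by auto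
  then show "rot T v < 3 * T" "rot T v div 3 = v div 3" "rot T (rot T (rot T v)) = v"
    "rot T (rot T v) \<noteq> v" "rot T v \<noteq> v"
    using rot[of 0] rot[of 1] rot[of 2] v by auto
qed

lemma rot_pair:
  assumes "3 * T \<le> v"
  shows "rot T v = (if even (v - 3 * T) then v + 1 else v - 1)"
    and "rot T (rot T v) = v" "rot T v \<noteq> v"
proof -
  show rot: "rot T v = (if even (v - 3 * T) then v + 1 else v - 1)"
    using assms unfolding rot_def by simp
  have "odd (v - 3 * T) \<Longrightarrow> 3 * T < v" using assms by (cases "v = 3 * T") auto
  then show "rot T v \<noteq> v" using rot by auto
  show "rot T (rot T v) = v"
  proof (cases "even (v - 3 * T)")
    case True
    then have "odd (v + 1 - 3 * T)" using assms by (simp add: Suc_diff_le)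
    then show ?thesis using rot True assms unfolding rot_def by simp
  next
    case False
    then have "1 \<le> v" "3 * T \<le> v - 1" "even (v - 1 - 3 * T)" using assms by presburger+
    then show ?thesis using rot False unfolding rot_def by simp
  qed
qed

lemma rot_pair_ge: "3 * T \<le> v \<Longrightarrow> 3 * T \<le> rot T v"
  using rot_pair(1)[of T v] by (cases "v = 3 * T") auto

lemma rot_neq: "rot T v \<noteq> v"
  using rot_triangle(5) rot_pair(3) by (metis not_le)

lemma rot_less:
  assumes "3 * T \<le> F" and "even (F - 3 * T)" and "v < F"
  shows "rot T v < F"
proof (cases "v < 3 * T")
  case True
  then show ?thesis using rot_triangle(1) assms(1) by (meson less_le_trans)
next
  case False
  have "even (v - 3 * T) \<Longrightarrow> v + 1 < F" using False assms by presburger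
  then show ?thesis using rot_pair(1)[of T v] False assms(3) by auto
qed

lemma rot_inj: assumes "rot T v = rot T w" shows "v = w"
proof (cases "v < 3 * T")
  case True
  then have "w < 3 * T" using assms rot_pair_ge[of T w] rot_triangle(1)[OF True] by fastforce
  then show ?thesis using assms rot_triangle(3) True by metis
next
  case False
  then have "3 * T \<le> w" using assms rot_pair_ge[of T v] rot_triangle(1)[of w T] by fastforce
  then show ?thesis using assms rot_pair(2) False by (metis not_le)
qed

lemma rot_same_triangle:
  assumes "v < 3 * T" "w < 3 * T" "v div 3 = w div 3" "v \<noteq> w"
  shows "w = rot T v \<or> v = rot T w"
proof -
  define q where "q = v div 3"
  have q: "q < T" using assms(1) unfolding q_def by linarith
  have rot: "rot T (3 * q + b) = 3 * q + (if b = 2 then 0 else b + 1)" if "b < 3" for b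
    using that q unfolding rot_def by auto
  obtain a b where ab: "v = 3 * q + a" "w = 3 * q + b" "a < 3" "b < 3"
    using assms(3) unfolding q_def by (metis div_mult_mod_eq mod_less_divisor mult.commute zero_less_numeral)
  then have "a \<in> {0, 1, 2}" "b \<in> {0, 1, 2}" by auto
  then show ?thesis using assms(4) rot[of a] rot[of b] ab by auto
qed

definition pair_code :: "nat \<Rightarrow> nat \<Rightarrow> nat \<Rightarrow> nat" where
  "pair_code F j k = min j k * F + max j k"

lemma pair_code_less: "j < F \<Longrightarrow> k < F \<Longrightarrow> pair_code F j k < F * F"
proof -
  assume "j < F" "k < F"
  then have "min j k * F + max j k < (min j k + 1) * F" by simp
  also have "\<dots> \<le> F * F" using \<open>j < F\<close> by (intro mult_right_mono) auto
  finally show ?thesis unfolding pair_code_def .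
qed

lemma pair_code_eq_iff:
  assumes "j1 < F" "k1 < F" "j2 < F" "k2 < F"
  shows "pair_code F j1 k1 = pair_code F j2 k2 \<longleftrightarrow> (j1 = j2 \<and> k1 = k2) \<or> (j1 = k2 \<and> k1 = j2)"
proof
  assume eq: "pair_code F j1 k1 = pair_code F j2 k2"
  have code: "pair_code F j k div F = min j k" "pair_code F j k mod F = max j k"
    if "j < F" "k < F" for j k
    using that unfolding pair_code_def by auto
  have "min j1 k1 = min j2 k2 \<and> max j1 k1 = max j2 k2"
    using code[OF assms(1,2)] code[OF assms(3,4)] eq by metis
  then show "(j1 = j2 \<and> k1 = k2) \<or> (j1 = k2 \<and> k1 = j2)" by (metis max_def min_def nat_le_linear)
qed (auto simp: pair_code_def min.commute max.commute)

text \<open>The three cells \<open>(j, rot j)\<close> of a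
  triangle of rows carry the common symbol \<open>F * F + j div 3\<close>; every other symbol occupies a pair
  of cells symmetric about the diagonal and is coded below \<open>F * F\<close>.\<close>
definition rot_array :: "nat \<Rightarrow> nat \<Rightarrow> nat \<Rightarrow> nat \<Rightarrow> nat option" where
  "rot_array T F j k = (if j = k \<or> j = rot T k then None
     else if k = rot T j then Some (F * F + j div 3) else Some (pair_code F j k))"

definition rot_symbols :: "nat \<Rightarrow> nat \<Rightarrow> nat set" where
  "rot_symbols T F = {t. \<exists>j<F. \<exists>k<F. rot_array T F j k = Some t}"

lemma rot_array_None: "rot_array T F j k = None \<longleftrightarrow> j = k \<or> j = rot T k"
  unfolding rot_array_def by auto

lemma rot_array_triangle_cell: "j < 3 * T \<Longrightarrow> rot_array T F j (rot T j) = Some (F * F + j div 3)"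
  using rot_triangle(4,5)[of j T] unfolding rot_array_def by auto

lemma rot_array_triangle_symbol:
  assumes "j < F" "k < F" "rot_array T F j k = Some t" "F * F \<le> t"
  shows "k = rot T j" "t = F * F + j div 3" "j < 3 * T"
proof -
  have nn: "j \<noteq> k" "j \<noteq> rot T k" using assms(3) unfolding rot_array_def by (auto split: if_splits)
  show k: "k = rot T j"
    using assms pair_code_less[of j F k] nn unfolding rot_array_def by (auto split: if_splits)
  then show "t = F * F + j div 3" using assms(3) nn unfolding rot_array_def by auto
  show "j < 3 * T" using nn(2) k rot_pair(2)[of T j] by (cases "j < 3 * T") auto
qed

lemma rot_array_pair_symbol:
  assumes "rot_array T F j k = Some t" "t < F * F"
  shows "t = pair_code F j k" "rot_array T F k j = Some t"
proof -
  have "j \<noteq> k" "j \<noteq> rot T k" "k \<noteq> rot T j"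
    using assms unfolding rot_array_def by (auto split: if_splits)
  then show "t = pair_code F j k" "rot_array T F k j = Some t"
    using assms(1) unfolding rot_array_def pair_code_def by (auto simp: min.commute max.commute)
qed

context
  fixes T F :: nat
  assumes T: "3 * T \<le> F" and even: "even (F - 3 * T)"
begin

lemma finite_rot_symbols: "finite (rot_symbols T F)"
proof (rule finite_subset)
  show "rot_symbols T F \<subseteq> {..< F * F + F}"
  proof
    fix t assume "t \<in> rot_symbols T F"
    then obtain j k where jk: "j < F" "k < F" "rot_array T F j k = Some t" unfolding rot_symbols_def by auto
    show "t \<in> {..< F * F + F}"
      using rot_array_triangle_symbol[OF jk] jk(1) by (cases "F * F \<le> t") (auto simp: div_le_dividend)
  qed
qed simp

lemma card_rot_array_col_None: "k < F \<Longrightarrow> card {j. j < F \<and> rot_array T F j k = None} = 2"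
proof -
  assume k: "k < F"
  then have "{j. j < F \<and> rot_array T F j k = None} = {k, rot T k}"
    using rot_less[OF T even k] unfolding rot_array_None by auto
  then show ?thesis using rot_neq[of T k] by simp
qed

lemma rot_array_row_unique:
  assumes "j < F" "k1 < F" "k2 < F" "rot_array T F j k1 = Some t" "rot_array T F j k2 = Some t"
  shows "k1 = k2"
proof (cases "F * F \<le> t")
  case True
  then show ?thesis
    using rot_array_triangle_symbol[OF assms(1,2,4)] rot_array_triangle_symbol[OF assms(1,3,5)] by simp
next
  case False
  then show ?thesis using rot_array_pair_symbol(1)[OF assms(4)] rot_array_pair_symbol(1)[OF assms(5)]
      pair_code_eq_iff assms(1-3) by auto
qed

lemma rot_array_col_unique:
  assumes "k < F" "j1 < F" "j2 < F" "rot_array T F j1 k = Some t" "rot_array T F j2 k = Some t"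
  shows "j1 = j2"
proof (cases "F * F \<le> t")
  case True
  then show ?thesis using rot_array_triangle_symbol[OF assms(2,1,4)] rot_array_triangle_symbol[OF assms(3,1,5)]
      rot_inj[of T j1 j2] by simp
next
  case False
  then show ?thesis using rot_array_pair_symbol(1)[OF assms(4)] rot_array_pair_symbol(1)[OF assms(5)]
      pair_code_eq_iff assms(1-3) by auto
qed

lemma rot_array_cross_empty:
  assumes "j1 < F" "j2 < F" "k1 < F" "k2 < F" "(j1, k1) \<noteq> (j2, k2)"
    and "rot_array T F j1 k1 = Some t" "rot_array T F j2 k2 = Some t"
  shows "rot_array T F j1 k2 = None \<and> rot_array T F j2 k1 = None"
proof (cases "F * F \<le> t")
  case True
  note t1 = rot_array_triangle_symbol[OF assms(1,3,6) True]
    and t2 = rot_array_triangle_symbol[OF assms(2,4,7) True]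
  have "j1 \<noteq> j2" using assms(5) t1 t2 by auto
  then have "j2 = rot T j1 \<or> j1 = rot T j2" using rot_same_triangle t1 t2 by simp
  then show ?thesis using t1(1,3) t2(1,3) rot_triangle(3) unfolding rot_array_None by auto
next
  case False
  then have "j1 = k2 \<and> k1 = j2" using rot_array_pair_symbol(1)[OF assms(6)]
      rot_array_pair_symbol(1)[OF assms(7)] pair_code_eq_iff assms(1-5) by auto
  then show ?thesis unfolding rot_array_None by simp
qed

lemma rot_array_PDA: "is_PDA (rot_symbols T F) F F 2 (rot_array T F)"
  by (rule is_PDA_I[OF finite_rot_symbols _ card_rot_array_col_None rot_array_row_unique
        rot_array_col_unique rot_array_cross_empty]) (auto simp: rot_symbols_def)

lemma rot_array_repeated:
  assumes j: "j < F" and k: "k < F" and t: "rot_array T F j k = Some t"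
  obtains j' k' where "j' < F" "k' < F" "rot_array T F j' k' = Some t" "(j', k') \<noteq> (j, k)"
proof (cases "F * F \<le> t")
  case True
  note big = rot_array_triangle_symbol[OF j k t True]
  have "rot T j < 3 * T" using rot_triangle(1)[OF big(3)] .
  then have "rot_array T F (rot T j) (rot T (rot T j)) = Some (F * F + rot T j div 3)"
    by (rule rot_array_triangle_cell)
  also have "\<dots> = Some t" unfolding big(2) rot_triangle(2)[OF big(3)] ..
  finally have cell: "rot_array T F (rot T j) (rot T (rot T j)) = Some t" .
  have row: "rot T j < F" using rot_less[OF T even j] .
  have "(rot T j, rot T (rot T j)) \<noteq> (j, k)" using rot_neq[of T j] by simp
  from that[OF row rot_less[OF T even row] cell this] show ?thesis .
next
  case False
  then have "rot_array T F k j = Some t" by (intro rot_array_pair_symbol(2)[OF t]) simp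
  moreover have "(k, j) \<noteq> (j, k)" using t rot_array_None[of T F j k] by auto
  ultimately show ?thesis by (rule that[OF k j])
qed

interpretation Rot: PDA_FF2 "rot_symbols T F" F "rot_array T F"
  by unfold_locales (rule rot_array_PDA)

lemma rot_mult_neq_1: assumes j: "j < F" and k: "k \<in> Rot.filled j" shows "Rot.mult j k \<noteq> 1"
proof -
  from k obtain t where t: "rot_array T F j k = Some t" and kF: "k < F" by (rule Rot.filledE)
  obtain j' k' where "j' < F" "k' < F" "rot_array T F j' k' = Some t" "(j', k') \<noteq> (j, k)"
    using rot_array_repeated[OF j kF t] .
  then have c: "(j', k') \<in> Rot.occ t" "(j', k') \<noteq> (j, k)" by (simp_all add: Rot.occ_iff)
  moreover have "(j, k) \<in> Rot.occ t" using j kF t by (simp add: Rot.occ_iff)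
  ultimately have "{(j, k), (j', k')} \<subseteq> Rot.occ t" by simp
  then have "card {(j, k), (j', k')} \<le> card (Rot.occ t)" by (rule card_mono[OF Rot.finite_occ])
  moreover have "card {(j, k), (j', k')} = 2" using c(2) by auto
  ultimately have "2 \<le> card (Rot.occ t)" by simp
  then show ?thesis unfolding Rot.mult_def using t by simp
qed

lemma rot_triples_pos: assumes j: "j < 3 * T" shows "1 \<le> Rot.triples j"
proof -
  define t where "t = F * F + j div 3"
  have in_T: "rot T j < 3 * T" "rot T (rot T j) < 3 * T" using rot_triangle(1) j by blast+
  have cells: "rot_array T F j (rot T j) = Some t" "rot_array T F (rot T j) (rot T (rot T j)) = Some t"
    "rot_array T F (rot T (rot T j)) j = Some t"
    unfolding t_def using rot_array_triangle_cell[OF j] rot_array_triangle_cell[OF in_T(1)]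
      rot_array_triangle_cell[OF in_T(2)] rot_triangle(2,3)[OF j] rot_triangle(2)[OF in_T(1)] by simp_all
  have "{(j, rot T j), (rot T j, rot T (rot T j)), (rot T (rot T j), j)} \<subseteq> Rot.occ t"
    using cells j in_T T by (auto simp: Rot.occ_iff)
  moreover have "card {(j, rot T j), (rot T j, rot T (rot T j)), (rot T (rot T j), j)} = 3"
    using rot_neq[of T j] rot_neq[of T "rot T j"] rot_triangle(4)[OF j] by auto
  ultimately have "3 \<le> card (Rot.occ t)" by (metis Rot.finite_occ card_mono)
  moreover have k: "rot T j \<in> Rot.filled j" using cells(1) in_T T unfolding Rot.filled_def by auto
  ultimately have "Rot.mult j (rot T j) = 3"
    using Rot.mult_le[OF _ k] j T cells(1) unfolding Rot.mult_def by simp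
  then have "rot T j \<in> {k \<in> Rot.filled j. Rot.mult j k = 3}" using k by simp
  then show ?thesis unfolding Rot.triples_def by (auto simp: Suc_le_eq card_gt_0_iff)
qed

lemma rot_symbols_card:
  "6 * real (card (rot_symbols T F)) \<le> 3 * (real F * real F - 2 * real F) - 3 * real T"
proof -
  have "Rot.singles j = 0" if "j < F" for j
    using rot_mult_neq_1[OF that] unfolding Rot.singles_def by auto
  then have count: "6 * real (card (Rot.symbol ` Rot.cells))
      = 3 * (real F * real F - 2 * real F) - real (\<Sum>j<F. Rot.triples j)"
    unfolding Rot.six_card_symbols by (simp add: sum_negf)
  have "3 * T = (\<Sum>j<3 * T. 1)" by simp
  also have "\<dots> \<le> (\<Sum>j<3 * T. Rot.triples j)" using rot_triples_pos by (intro sum_mono) auto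
  also have "\<dots> \<le> (\<Sum>j<F. Rot.triples j)" using T by (intro sum_mono2) auto
  finally have "3 * real T \<le> real (\<Sum>j<F. Rot.triples j)"
    by (metis of_nat_le_iff of_nat_mult of_nat_numeral)
  moreover have "Rot.symbol ` Rot.cells = rot_symbols T F"
    unfolding Rot.symbol_def Rot.cells_def Rot.filled_def rot_symbols_def by force
  ultimately show ?thesis using count by simp
qed

end

section \<open>The recursion\<close>

lemma s_PDA_le: "is_PDA S F K Z r \<Longrightarrow> s_PDA F K Z \<le> card S"
  unfolding s_PDA_def by (rule Least_le) blast

lemma s_PDA_attainedE:
  assumes "is_PDA S F K Z r"
  obtains S' r' where "is_PDA S' F K Z r'" and "card S' = s_PDA F K Z"
  using LeastI[of "\<lambda>n. \<exists>S r. is_PDA S F K Z r \<and> card S = n" "card S"] assms that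
  unfolding s_PDA_def by blast

lemma triangle_count_exists: "2 \<le> (F::nat) \<Longrightarrow> \<exists>T. 3 * T \<le> F \<and> even (F - 3 * T) \<and> F \<le> 3 * T + 4"
  by (rule exI[of _ "if F mod 3 = 1 then F div 3 - 1 else F div 3"]) presburger

lemma s_PDA_square_bounds:
  assumes F: "3 \<le> F"
  shows "int F * (3 * int F - 7) \<le> 6 * int (s_PDA F F 2)"
    and "6 * int (s_PDA F F 2) \<le> int F * (3 * int F - 7) + 4"
proof -
  obtain T where T: "3 * T \<le> F" "even (F - 3 * T)" "F \<le> 3 * T + 4"
    using triangle_count_exists[of F] F by auto
  have rot: "is_PDA (rot_symbols T F) F F 2 (rot_array T F)" by (rule rot_array_PDA[OF T(1,2)])
  then obtain S r where opt: "is_PDA S F F 2 r" "card S = s_PDA F F 2" by (rule s_PDA_attainedE)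
  interpret P: PDA_FF2 S F r by unfold_locales (rule opt(1))
  show "int F * (3 * int F - 7) \<le> 6 * int (s_PDA F F 2)"
    using P.card_symbols_lower[OF F] opt(2) by simp
  have "6 * real (s_PDA F F 2) \<le> 3 * (real F * real F - 2 * real F) - 3 * real T"
    using rot_symbols_card[OF T(1,2)] s_PDA_le[OF rot] by linarith
  also have "\<dots> \<le> real F * (3 * real F - 7) + 4" using T(3) by (simp add: algebra_simps)
  finally have "real_of_int (6 * int (s_PDA F F 2)) \<le> real_of_int (int F * (3 * int F - 7) + 4)"
    by simp
  then show "6 * int (s_PDA F F 2) \<le> int F * (3 * int F - 7) + 4" by (simp only: of_int_le_iff)
qed

lemma eq_of_sixfold_bounds:
  fixes a b x y c :: int
  assumes "x \<le> 6 * a" "6 * a \<le> x + 4" "y \<le> 6 * b" "6 * b \<le> y + 4" "x - y = 6 * c"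
  shows "a = b + c"
  using assms by linarith

theorem mainTheorem19:
  fixes F :: nat
  assumes "F \<ge> 6"
  shows "int (s_PDA F F 2) = 3 * int F - 8 + int (s_PDA (F - 3) (F - 3) 2)"
proof -
  have "3 \<le> F" "3 \<le> F - 3" using assms by simp_all
  note big = s_PDA_square_bounds[OF this(1)] and small = s_PDA_square_bounds[OF this(2)]
  have "int F * (3 * int F - 7) - int (F - 3) * (3 * int (F - 3) - 7) = 6 * (3 * int F - 8)"
    using assms by (simp add: of_nat_diff algebra_simps)
  from eq_of_sixfold_bounds[OF big small this] show ?thesis by simp
qed

end
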